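(* Assume $\tilde R=R$ and $\tilde\Phi>\Phi$ (so $\tilde\rho>\rho$), that $c_A$ is convex and real-valued on $[0,\infty)$, that a maximizer $\tilde h_A$ of $\pi_{\tilde\rho}$ exists, that $\bar{\bar h}_A(h)<\infty$ for all $h\in(0,H)$, that $\bar{\bar h}_A$ is non-decreasing on $(0,H)$, and that $\hat h\in(0,H)$ satisfies $\hat h+\bar{\bar h}_A(\hat h)=H$. Then $0<\hat h<\tfrac12H$ and, if the miner's pre-attack hash power satisfies $h^*_A\in(\hat h,H)$, the incentive compatibility constraint $$\Big(\pi_{\rho}(h^*_A)-\pi_{\tilde\rho}\big(\max\{\tilde h_A,\underline h_A\}\big)\Big)\mathcal L\ \ge\ V_{attack}$$ fails for $V_{attack}=0$; i.e., there is no equilibrium without a majority attack even when the attack yields no private benefit.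
   Context: Proof-of-Work mining model. The aggregate hash power on the blockchain before an attack is $H>0$, the target time between blocks is $\tau>0$, and the difficulty is held fixed at $D=\tau H$, so a miner applying hash power $h$ alone on a chain mines in expectation $h/D$ blocks per unit of time. On the benchmark chain each block yields expected block reward $R\ge0$ and expected transaction fees $\Phi\ge0$; on the attacking chain the values are $\tilde R,\tilde\Phi$. Write $\rho=R+\Phi$, $\tilde\rho=\tilde R+\tilde\Phi$. The miner (potential attacker) $A$ has cost per unit time $c_A(h)$ of hash power $h\ge0$; flow profit at reward level $x$ is $\pi_x(h)=\frac hDx-c_A(h)$. $h^*_A$ is $A$'s pre-attack hash power (treated as a parameter in $(0,H)$); a successful attack requires at least $\underline h_A=\max\{\tfrac12H,H-h^*_A\}$; $\tilde h_A$ maximizes $\pi_{\tilde\rho}$ on $[0,\infty)$; $A$ attacks with $\max\{\tilde h_A,\underline h_A\}$; expected attack duration is $\mathcal L>0$. $V_{attack}\ge0$ is $A$'s private benefit from a successful attack. For $h\in(0,H)$, $\bar{\bar h}_A(h)=\sup\{h'>h:\pi_{\tilde\rho}(h')\ge\pi_\rho(h)\}$. *)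

theory Defs
  imports "HOL-Analysis.Analysis"
begin

definition flow_profit :: "real \<Rightarrow> (real \<Rightarrow> real) \<Rightarrow> real \<Rightarrow> real \<Rightarrow> real" where
  "flow_profit D c x h = h / D * x - c h"

definition hbarbar :: "real \<Rightarrow> (real \<Rightarrow> real) \<Rightarrow> real \<Rightarrow> real \<Rightarrow> real \<Rightarrow> real" where
  "hbarbar D c rho rhot h =
     Sup {h'. h' > h \<and> flow_profit D c rhot h' \<ge> flow_profit D c rho h}"

text \<open>Minimal hash power for a successful attack: max(H/2, H - h*).\<close>
definition h_low :: "real \<Rightarrow> real \<Rightarrow> real" where
  "h_low H hstar = max (H / 2) (H - hstar)"

definition icc :: "real \<Rightarrow> (real \<Rightarrow> real) \<Rightarrow> real \<Rightarrow> real \<Rightarrow> real \<Rightarrow> real \<Rightarrow> real \<Rightarrow> real \<Rightarrow> real \<Rightarrow> bool" where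
  "icc D c rho rhot H hstar ht L V \<longleftrightarrow>
     (flow_profit D c rho hstar - flow_profit D c rhot (max ht (h_low H hstar))) * L \<ge> V"

end

theory Submission
  imports Defs
begin

text \<open>Higher fees put the attacking profit curve \<open>\<pi>\<^sub>\<rho>\<^sub>t\<close> strictly above the honest one
  \<open>\<pi>\<^sub>\<rho>\<close> at every positive hash power, and \<open>\<pi>\<^sub>\<rho>\<^sub>t\<close> is continuous there because the
  cost is convex. So the set defining \<open>hbarbar h\<close> contains points just right of \<open>h\<close>, whence
  \<open>h < hbarbar h\<close>, and \<open>hhat + hbarbar hhat = H\<close> forces \<open>hhat < H/2\<close>.
  For \<open>hstar > hhat\<close> monotonicity gives \<open>hbarbar hstar \<ge> H - hhat\<close>, which exceeds both
  \<open>H/2\<close> and \<open>H - hstar\<close>, i.e. the minimal attack size \<open>h_low\<close>. Hence some \<open>y > h_low\<close>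
  earns \<open>\<pi>\<^sub>\<rho>\<^sub>t y \<ge> \<pi>\<^sub>\<rho> hstar\<close>, while the maximiser earns
  \<open>\<pi>\<^sub>\<rho>\<^sub>t ht \<ge> \<pi>\<^sub>\<rho>\<^sub>t hstar > \<pi>\<^sub>\<rho> hstar\<close>. The attack level \<open>max ht h_low\<close> is either
  \<open>ht\<close> or lies between \<open>ht\<close> and \<open>y\<close>, so by concavity of \<open>\<pi>\<^sub>\<rho>\<^sub>t\<close> attacking is strictly
  more profitable than mining honestly, and the constraint fails already for zero benefit.\<close>

lemma exists_right_ge_of_isCont:
  fixes f :: "real \<Rightarrow> real"
  assumes "isCont f x" and "v < f x"
  shows "\<exists>y>x. v \<le> f y"
proof -
  have "(f \<longlongrightarrow> f x) (at_right x)"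
    using assms(1) by (simp add: isCont_def filterlim_at_split)
  then have "eventually (\<lambda>y. v < f y) (at_right x)"
    using assms(2) by (rule order_tendstoD(1))
  then have "eventually (\<lambda>y. v < f y \<and> x < y) (at_right x)"
    by (simp add: eventually_conj eventually_at_right_less)
  then obtain y where "v < f y \<and> x < y"
    using eventually_happens trivial_limit_at_right_real by blast
  then show ?thesis by auto
qed

lemma concave_on_gt_between:
  fixes f :: "real \<Rightarrow> real"
  assumes "concave_on S f" "a \<in> S" "b \<in> S" "a \<le> z" "z < b" "v < f a" "v \<le> f b"
  shows "v < f z"
proof -
  define t where "t = (z - a) / (b - a)"
  have t: "0 \<le> t" "t < 1" using assms(4,5) by (auto simp: t_def)
  have "t * (b - a) = z - a" using assms(4,5) by (simp add: t_def)
  then have "z = (1 - t) * a + t * b" by (simp add: algebra_simps)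
  then have "(1 - t) * f a + t * f b \<le> f z"
    using concave_onD[OF assms(1), of t a b] t assms(2,3) by simp
  moreover have "v < (1 - t) * f a + t * f b"
  proof -
    have "(1 - t) * v < (1 - t) * f a" "t * v \<le> t * f b"
      using t assms(6,7) by (simp_all add: mult_left_mono)
    then show ?thesis by (simp add: algebra_simps)
  qed
  ultimately show ?thesis by simp
qed

lemma concave_on_max_gt:
  fixes f :: "real \<Rightarrow> real"
  assumes "concave_on S f" "m \<in> S" "y \<in> S" "z < y" "v < f m" "v \<le> f y"
  shows "v < f (max m z)"
proof (cases "z \<le> m")
  case False
  then show ?thesis
    using concave_on_gt_between[OF assms(1), of m y z v] assms by simp
qed (use assms in simp)

lemma flow_profit_less_reward:
  assumes "0 < D" "0 < h" "x < y"
  shows "flow_profit D c x h < flow_profit D c y h"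
  using assms by (simp add: flow_profit_def divide_strict_right_mono)

lemma concave_on_flow_profit:
  assumes "convex_on S c"
  shows "concave_on S (flow_profit D c x)"
proof -
  have "concave_on S (\<lambda>h. h / D * x)"
    using convex_on_imp_convex[OF assms]
    by (simp add: concave_on_iff algebra_simps add_divide_distrib)
  then show ?thesis
    unfolding flow_profit_def by (rule concave_on_diff[OF _ assms])
qed

lemma isCont_flow_profit:
  assumes "convex_on {0..} c" "0 < h"
  shows "isCont (flow_profit D c x) h"
proof -
  have "continuous_on {0<..} c"
    by (rule convex_on_continuous) (auto intro: convex_on_subset[OF assms(1)])
  then have "isCont c h"
    using assms(2) by (simp add: continuous_on_eq_continuous_at)
  then show ?thesis
    unfolding flow_profit_def divide_inverse by (intro continuous_intros)
qed

lemma hbarbar_set_nonempty: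
  assumes "0 < D" "\<rho> < \<rho>t" "convex_on {0..} c" "0 < h"
  shows "{h'. h' > h \<and> flow_profit D c \<rho>t h' \<ge> flow_profit D c \<rho> h} \<noteq> {}"
  using exists_right_ge_of_isCont[OF isCont_flow_profit[OF assms(3,4)]]
    flow_profit_less_reward[OF assms(1,4,2)] by auto

lemma less_hbarbar_iff:
  assumes "0 < D" "\<rho> < \<rho>t" "convex_on {0..} c" "0 < h"
    and "bdd_above {h'. h' > h \<and> flow_profit D c \<rho>t h' \<ge> flow_profit D c \<rho> h}"
  shows "z < hbarbar D c \<rho> \<rho>t h \<longleftrightarrow>
    (\<exists>y>z. y > h \<and> flow_profit D c \<rho>t y \<ge> flow_profit D c \<rho> h)"
  unfolding hbarbar_def using less_cSup_iff[OF hbarbar_set_nonempty[OF assms(1-4)] assms(5)]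
  by auto

lemma less_hbarbar:
  assumes "0 < D" "\<rho> < \<rho>t" "convex_on {0..} c" "0 < h"
    and "bdd_above {h'. h' > h \<and> flow_profit D c \<rho>t h' \<ge> flow_profit D c \<rho> h}"
  shows "h < hbarbar D c \<rho> \<rho>t h"
  using less_hbarbar_iff[OF assms, of h] hbarbar_set_nonempty[OF assms(1-4)] by auto

lemma icc_zero_iff:
  assumes "0 < L"
  shows "icc D c \<rho> \<rho>t H hstar ht L 0 \<longleftrightarrow>
    flow_profit D c \<rho>t (max ht (h_low H hstar)) \<le> flow_profit D c \<rho> hstar"
  using assms by (simp add: icc_def zero_le_mult_iff)

theorem proposition1:
  fixes H \<tau> R \<Phi> Rt \<Phi>t L hhat hstar ht :: real
    and cA :: "real \<Rightarrow> real"
  defines "D \<equiv> \<tau> * H"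
      and "\<rho> \<equiv> R + \<Phi>"
      and "\<rho>t \<equiv> Rt + \<Phi>t"
  assumes H_pos: "H > 0" and tau_pos: "\<tau> > 0"
      and R_nonneg: "R \<ge> 0" and Phi_nonneg: "\<Phi> \<ge> 0"
      and Rt_eq: "Rt = R" and Phit_gt: "\<Phi>t > \<Phi>"
      and L_pos: "L > 0"
      and hstar_range: "0 < hstar" "hstar < H"
      and convex: "convex_on {0..} cA"
      and ht_max: "ht \<ge> 0" "\<forall>h\<ge>0. flow_profit D cA \<rho>t h \<le> flow_profit D cA \<rho>t ht"
      and hbb_finite: "\<forall>h\<in>{0<..<H}.
            bdd_above {h'. h' > h \<and> flow_profit D cA \<rho>t h' \<ge> flow_profit D cA \<rho> h}"
      and hbb_mono: "mono_on {0<..<H} (hbarbar D cA \<rho> \<rho>t)"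
      and hhat_range: "hhat \<in> {0<..<H}"
      and hhat_eq: "hhat + hbarbar D cA \<rho> \<rho>t hhat = H"
  shows "0 < hhat \<and> hhat < H / 2 \<and>
         (hstar \<in> {hhat<..<H} \<longrightarrow> \<not> icc D cA \<rho> \<rho>t H hstar ht L 0)"
proof -
  have D_pos: "0 < D" using H_pos tau_pos by (simp add: D_def)
  have rho_less: "\<rho> < \<rho>t" using Rt_eq Phit_gt by (simp add: \<rho>_def \<rho>t_def)
  have hhat_half: "hhat < H / 2"
    using less_hbarbar[OF D_pos rho_less convex, of hhat] hbb_finite hhat_range hhat_eq by auto
  have "\<not> icc D cA \<rho> \<rho>t H hstar ht L 0" if hstar: "hstar \<in> {hhat<..<H}"
  proof -
    have "hbarbar D cA \<rho> \<rho>t hhat \<le> hbarbar D cA \<rho> \<rho>t hstar"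
      using hbb_mono hhat_range hstar by (auto simp: mono_on_def)
    then have "h_low H hstar < hbarbar D cA \<rho> \<rho>t hstar"
      using hhat_eq hhat_half hstar by (auto simp: h_low_def)
    then obtain y where "h_low H hstar < y" "flow_profit D cA \<rho>t y \<ge> flow_profit D cA \<rho> hstar"
      using less_hbarbar_iff[OF D_pos rho_less convex, of hstar] hbb_finite hstar_range by auto
    moreover have "flow_profit D cA \<rho> hstar < flow_profit D cA \<rho>t ht"
      using flow_profit_less_reward[OF D_pos hstar_range(1) rho_less, of cA]
        ht_max(2)[rule_format, of hstar] hstar_range by linarith
    moreover have "0 \<le> h_low H hstar" using H_pos by (simp add: h_low_def)
    ultimately have "flow_profit D cA \<rho> hstar < flow_profit D cA \<rho>t (max ht (h_low H hstar))"
      by (intro concave_on_max_gt[OF concave_on_flow_profit[OF convex]]) (use ht_max(1) in auto)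
    then show ?thesis by (simp add: icc_zero_iff[OF L_pos])
  qed
  then show ?thesis using hhat_range hhat_half by auto
qed

end
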